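(* Let $n\ge k\ge d$ be positive integers and $\boldsymbol{\alpha}_k=(\alpha_1,\dots,\alpha_k)$ a list of $k$ distinct rational numbers. Let $\mathcal{Z}_{n,k,d}(\boldsymbol{\alpha}_k)\subseteq\mathbb{Q}^{n+d}$ be the set of points $(z_1,\dots,z_n;z_{n+1},\dots,z_{n+d})$ such that every coordinate lies in $\{\alpha_1,\dots,\alpha_k\}$, the coordinates $z_{n+1},\dots,z_{n+d}$ are distinct, and $\{z_1,\dots,z_n\}=\{z_{n+1},\dots,z_{n+d}\}$. Then the vanishing ideal $\mathbf{I}(\mathcal{Z}_{n,k,d}(\boldsymbol{\alpha}_k))\subseteq\mathbb{Q}[x_1,\dots,x_n,y_1,\dots,y_d]$ is generated by \begin{itemize} \item $e_r(\boldsymbol{\alpha}_k) - e_{r-1}(\boldsymbol{\alpha}_k)h_1(\mathbf{y}_d) + \cdots + (-1)^r h_r(\mathbf{y}_d)$ for all $r>k-d$, \item $e_r(\mathbf{x}_n) - e_{r-1}(\mathbf{x}_n)h_1(\mathbf{y}_d)+\cdots+(-1)^r h_r(\mathbf{y}_d)$ for all $r>n-d$, \item $x_i^d - x_i^{d-1}e_1(\mathbf{y}_d)+\cdots+(-1)^d e_d(\mathbf{y}_d)$ for $i=1,\dots,n$. \end{itemize}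
   Context: The coordinate ring of $\mathbb{Q}^{n+d}$ is identified with $\mathbb{Q}[\mathbf{x}_n,\mathbf{y}_d]$, $\mathbf{x}_n=(x_1,\dots,x_n)$, $\mathbf{y}_d=(y_1,\dots,y_d)$. For a set $\mathcal{Z}$, $\mathbf{I}(\mathcal{Z})$ is the ideal of polynomials vanishing on $\mathcal{Z}$. $e_r,h_r$ are elementary and complete homogeneous symmetric polynomials (with $e_0=h_0=1$, $e_r=0$ when $r$ exceeds the number of variables). *)

theory Defs
  imports Complex_Main "HOL-Library.Poly_Mapping"
begin

text \<open>Multivariate polynomials over the rationals in the variables indexed by nat:
  a monomial is a finitely supported exponent map nat \<Rightarrow>0 nat, a polynomial
  a finitely supported coefficient map on monomials (product = convolution).\<close>

type_synonym mpoly = "(nat \<Rightarrow>\<^sub>0 nat) \<Rightarrow>\<^sub>0 rat"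

definition Var :: "nat \<Rightarrow> mpoly" where
  "Var i = Poly_Mapping.single (Poly_Mapping.single i 1) 1"

definition Const :: "rat \<Rightarrow> mpoly" where
  "Const c = Poly_Mapping.single 0 c"

definition vars :: "mpoly \<Rightarrow> nat set" where
  "vars p = (\<Union>m\<in>Poly_Mapping.keys p. Poly_Mapping.keys (m::nat \<Rightarrow>\<^sub>0 nat))"

definition eval :: "mpoly \<Rightarrow> (nat \<Rightarrow> rat) \<Rightarrow> rat" where
  "eval p z = (\<Sum>m\<in>Poly_Mapping.keys p. Poly_Mapping.lookup p m * (\<Prod>i\<in>Poly_Mapping.keys (m::nat \<Rightarrow>\<^sub>0 nat). z i ^ Poly_Mapping.lookup m i))"

definition polyring :: "nat \<Rightarrow> mpoly set" where
  "polyring N = {p. vars p \<subseteq> {..<N}}"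

definition ideal_gen :: "nat \<Rightarrow> mpoly set \<Rightarrow> mpoly set" where
  "ideal_gen N G = {p. \<exists>F c. finite F \<and> F \<subseteq> G \<and> (\<forall>g\<in>F. c g \<in> polyring N) \<and>
                        p = (\<Sum>g\<in>F. c g * g)}"

definition vanishing_ideal :: "nat \<Rightarrow> (nat \<Rightarrow> rat) set \<Rightarrow> mpoly set" where
  "vanishing_ideal N Z = {p \<in> polyring N. \<forall>z\<in>Z. eval p z = 0}"

definition esym :: "nat \<Rightarrow> 'a::comm_ring_1 list \<Rightarrow> 'a" where
  "esym r l = (\<Sum>S\<in>{S. S \<subseteq> {..<length l} \<and> card S = r}. \<Prod>i\<in>S. l ! i)"

definition hsym :: "nat \<Rightarrow> 'a::comm_ring_1 list \<Rightarrow> 'a" where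
  "hsym r l = (\<Sum>f\<in>{f. (\<forall>i. i \<ge> length l \<longrightarrow> f i = 0) \<and> (\<Sum>i<length l. f i) = r}.
                  \<Prod>i<length l. (l ! i) ^ f i)"

text \<open>x_i is Var (i-1) for i = 1..n, y_j is Var (n+j-1) for j = 1..d.\<close>
definition xs :: "nat \<Rightarrow> mpoly list" where "xs n = map Var [0..<n]"
definition ys :: "nat \<Rightarrow> nat \<Rightarrow> mpoly list" where "ys n d = map Var [n..<n+d]"

text \<open>Points (z_1..z_n; z_{n+1}..z_{n+d}) stored as z 0 .. z (n+d-1), zero elsewhere.\<close>
definition Zset :: "nat \<Rightarrow> nat \<Rightarrow> rat list \<Rightarrow> (nat \<Rightarrow> rat) set" where
  "Zset n d \<alpha> = {z. (\<forall>i<n+d. z i \<in> set \<alpha>) \<and> (\<forall>i\<ge>n+d. z i = 0) \<and>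
                    inj_on z {n..<n+d} \<and> z ` {..<n} = z ` {n..<n+d}}"

definition gens :: "nat \<Rightarrow> nat \<Rightarrow> nat \<Rightarrow> rat list \<Rightarrow> mpoly set" where
  "gens n k d \<alpha> =
     {(\<Sum>j\<le>r. (-1)^j * esym (r-j) (map Const \<alpha>) * hsym j (ys n d)) | r. r > k - d}
   \<union> {(\<Sum>j\<le>r. (-1)^j * esym (r-j) (xs n) * hsym j (ys n d)) | r. r > n - d}
   \<union> {(\<Sum>j\<le>d. (-1)^j * Var i ^ (d-j) * esym j (ys n d)) | i. i < n}"

end

theory Submission
  imports Defs "HOL-Library.FuncSet" "HOL-Computational_Algebra.Polynomial_FPS"
begin

(*
  Write E_u(t) = prod_i (1 + u_i t) for a list u. The generators of the first two families are
  the coefficients of t^r, r > |u| - |v|, in E_u(t) / E_v(t) for (u, v) = (alpha, y) and (x, y).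
  At a point they all vanish iff E_v(t) divides E_u(t), i.e. iff v is a submultiset of u; in
  particular they vanish on Z.

  Conversely, Lagrange interpolation of each y_j over the nodes alpha gives a partition of unity
  1 = sum_b E_b. Since prod_c (y_j - c) lies in the ideal I, multiplication by y_j acts on E_b
  modulo I as the scalar b_j, so E_b p = p(b) E_b modulo I. If b is not injective, a generator of
  the first family does not vanish at b, which forces E_b into I. Otherwise the third family lets
  the x_i be interpolated over the values of b in the same way, giving E_b E'_a p = p(a; b) E_b E'_a
  modulo I: either a misses a value of b and a generator of the second family forces E_b E'_a
  into I, or (a; b) lies in Z and p vanishes there.
*)

unbundle fps_syntax

section \<open>Evaluation and variables of polynomials\<close>

definition eval_monomial :: "(nat \<Rightarrow>\<^sub>0 nat) \<Rightarrow> (nat \<Rightarrow> rat) \<Rightarrow> rat" where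
  "eval_monomial m z = (\<Prod>i\<in>Poly_Mapping.keys m. z i ^ Poly_Mapping.lookup m i)"

lemma eval_monomial_superset:
  assumes "finite S" "Poly_Mapping.keys m \<subseteq> S"
  shows "eval_monomial m z = (\<Prod>i\<in>S. z i ^ Poly_Mapping.lookup m i)"
  unfolding eval_monomial_def
  by (rule prod.mono_neutral_left[OF assms]) (auto simp: in_keys_iff)

lemma eval_monomial_zero [simp]: "eval_monomial 0 z = 1"
  by (simp add: eval_monomial_def)

lemma eval_monomial_add: "eval_monomial (m1 + m2) z = eval_monomial m1 z * eval_monomial m2 z"
proof -
  let ?S = "Poly_Mapping.keys m1 \<union> Poly_Mapping.keys m2"
  have "eval_monomial (m1 + m2) z = (\<Prod>i\<in>?S. z i ^ Poly_Mapping.lookup (m1 + m2) i)"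
    by (rule eval_monomial_superset) (simp_all add: keys_add)
  also have "\<dots> = (\<Prod>i\<in>?S. z i ^ Poly_Mapping.lookup m1 i * z i ^ Poly_Mapping.lookup m2 i)"
    by (simp add: lookup_add power_add)
  also have "\<dots> = eval_monomial m1 z * eval_monomial m2 z"
    by (simp add: prod.distrib eval_monomial_superset[of ?S m1] eval_monomial_superset[of ?S m2])
  finally show ?thesis .
qed

lemma eval_superset:
  assumes "finite S" "Poly_Mapping.keys p \<subseteq> S"
  shows "eval p z = (\<Sum>m\<in>S. Poly_Mapping.lookup p m * eval_monomial m z)"
  unfolding eval_def eval_monomial_def[symmetric]
  by (rule sum.mono_neutral_left[OF assms]) (auto simp: in_keys_iff)

lemma eval_zero [simp]: "eval 0 z = 0"
  by (simp add: eval_def)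

lemma eval_add: "eval (p + q) z = eval p z + eval q z"
proof -
  let ?S = "Poly_Mapping.keys p \<union> Poly_Mapping.keys q"
  have "eval (p + q) z = (\<Sum>m\<in>?S. Poly_Mapping.lookup (p + q) m * eval_monomial m z)"
    by (rule eval_superset) (simp_all add: keys_add)
  also have "\<dots> = eval p z + eval q z"
    by (simp add: lookup_add algebra_simps sum.distrib eval_superset[of ?S p] eval_superset[of ?S q])
  finally show ?thesis .
qed

lemma eval_single: "eval (Poly_Mapping.single m c) z = c * eval_monomial m z"
  by (subst eval_superset[of "{m}"]) auto

lemma eval_sum: "eval (\<Sum>i\<in>S. f i) z = (\<Sum>i\<in>S. eval (f i) z)"
  by (induction S rule: infinite_finite_induct) (auto simp: eval_add)

lemma eval_uminus: "eval (- p) z = - eval p z"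
  using eval_add[of p "- p" z] by simp

lemma eval_diff: "eval (p - q) z = eval p z - eval q z"
  using eval_add[of p "- q" z] by (simp add: eval_uminus)

lemma poly_mapping_sum_single:
  "p = (\<Sum>m\<in>Poly_Mapping.keys p. Poly_Mapping.single m (Poly_Mapping.lookup p m))"
  by (rule poly_mapping_eqI)
     (auto simp: lookup_sum lookup_single when_def in_keys_iff sum.delta)

lemma eval_mult: "eval (p * q) z = eval p z * eval q z"
proof -
  have "p * q = (\<Sum>m\<in>Poly_Mapping.keys p. \<Sum>m'\<in>Poly_Mapping.keys q.
       Poly_Mapping.single (m + m') (Poly_Mapping.lookup p m * Poly_Mapping.lookup q m'))"
    by (subst poly_mapping_sum_single[of p], subst poly_mapping_sum_single[of q])
       (simp add: sum_product mult_single)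
  then have "eval (p * q) z = (\<Sum>m\<in>Poly_Mapping.keys p. \<Sum>m'\<in>Poly_Mapping.keys q.
       (Poly_Mapping.lookup p m * eval_monomial m z) * (Poly_Mapping.lookup q m' * eval_monomial m' z))"
    by (simp add: eval_sum eval_single eval_monomial_add algebra_simps)
  also have "\<dots> = eval p z * eval q z"
    by (simp add: sum_product eval_def eval_monomial_def)
  finally show ?thesis .
qed

lemma eval_one [simp]: "eval 1 z = 1"
  using eval_single[of 0 1 z] by (simp add: one_poly_mapping.abs_eq[symmetric])

lemma eval_Const [simp]: "eval (Const c) z = c"
  by (simp add: Const_def eval_single)

lemma eval_Var [simp]: "eval (Var i) z = z i"
  by (simp add: Var_def eval_single eval_monomial_def)

lemma eval_prod: "eval (\<Prod>i\<in>S. f i) z = (\<Prod>i\<in>S. eval (f i) z)"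
  by (induction S rule: infinite_finite_induct) (auto simp: eval_mult)

lemma eval_power: "eval (p ^ e) z = eval p z ^ e"
  by (induction e) (auto simp: eval_mult)

lemma eval_esym: "eval (esym r l) z = esym r (map (\<lambda>p. eval p z) l)"
  unfolding esym_def eval_sum eval_prod length_map
  by (intro sum.cong refl prod.cong) auto

lemma eval_hsym: "eval (hsym r l) z = hsym r (map (\<lambda>p. eval p z) l)"
  unfolding hsym_def eval_sum eval_prod eval_power length_map
  by (intro sum.cong refl prod.cong) auto

lemma vars_add_subset: "vars p \<subseteq> V \<Longrightarrow> vars q \<subseteq> V \<Longrightarrow> vars (p + q) \<subseteq> V"
  unfolding vars_def using keys_add[of p q] by blast

lemma vars_uminus [simp]: "vars (- p) = vars p"
proof -
  have "Poly_Mapping.keys (- p) = Poly_Mapping.keys p"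
    by (auto simp: in_keys_iff)
  then show ?thesis by (simp add: vars_def)
qed

lemma vars_mult_subset: "vars p \<subseteq> V \<Longrightarrow> vars q \<subseteq> V \<Longrightarrow> vars (p * q) \<subseteq> V"
proof (intro subsetI)
  fix i assume V: "vars p \<subseteq> V" "vars q \<subseteq> V" and "i \<in> vars (p * q)"
  then obtain m where m: "m \<in> Poly_Mapping.keys (p * q)" "i \<in> Poly_Mapping.keys m"
    by (auto simp: vars_def)
  from m(1) keys_mult obtain a b where
    "m = a + b" "a \<in> Poly_Mapping.keys p" "b \<in> Poly_Mapping.keys q"
    by blast
  with m(2) keys_add[of a b] V show "i \<in> V"
    unfolding vars_def by blast
qed

lemma vars_zero [simp]: "vars 0 = {}"
  by (simp add: vars_def)

lemma vars_one [simp]: "vars 1 = {}"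
  by (simp add: vars_def one_poly_mapping.abs_eq[symmetric])

lemma vars_sum_subset: "(\<And>i. i \<in> S \<Longrightarrow> vars (f i) \<subseteq> V) \<Longrightarrow> vars (\<Sum>i\<in>S. f i) \<subseteq> V"
proof (induction S rule: infinite_finite_induct)
  case (insert x F) then show ?case by (simp add: vars_add_subset)
qed simp_all

lemma vars_prod_subset: "(\<And>i. i \<in> S \<Longrightarrow> vars (f i) \<subseteq> V) \<Longrightarrow> vars (\<Prod>i\<in>S. f i) \<subseteq> V"
proof (induction S rule: infinite_finite_induct)
  case (insert x F) then show ?case by (simp add: vars_mult_subset)
qed simp_all

lemma vars_power_subset: "vars p \<subseteq> V \<Longrightarrow> vars (p ^ e) \<subseteq> V"
  by (induction e) (simp_all add: vars_mult_subset)

lemma vars_Const [simp]: "vars (Const c) = {}"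
  by (simp add: vars_def Const_def)

lemma vars_Var: "vars (Var i) \<subseteq> {i}"
  by (simp add: vars_def Var_def)

lemma vars_esym_subset:
  assumes "\<And>x. x \<in> set l \<Longrightarrow> vars x \<subseteq> V"
  shows "vars (esym r l) \<subseteq> V"
  unfolding esym_def
proof (intro vars_sum_subset vars_prod_subset)
  fix S i assume "S \<in> {S. S \<subseteq> {..<length l} \<and> card S = r}" "i \<in> S"
  then show "vars (l ! i) \<subseteq> V" using assms nth_mem by blast
qed

lemma vars_hsym_subset:
  assumes "\<And>x. x \<in> set l \<Longrightarrow> vars x \<subseteq> V"
  shows "vars (hsym r l) \<subseteq> V"
  unfolding hsym_def
proof (intro vars_sum_subset vars_prod_subset vars_power_subset)
  fix i assume "i \<in> {..<length l}"
  then show "vars (l ! i) \<subseteq> V" using assms nth_mem by blast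
qed

lemma polyring_add [intro]: "p \<in> polyring N \<Longrightarrow> q \<in> polyring N \<Longrightarrow> p + q \<in> polyring N"
  by (simp add: polyring_def vars_add_subset)

lemma polyring_mult [intro]: "p \<in> polyring N \<Longrightarrow> q \<in> polyring N \<Longrightarrow> p * q \<in> polyring N"
  by (simp add: polyring_def vars_mult_subset)

lemma polyring_uminus [intro]: "p \<in> polyring N \<Longrightarrow> - p \<in> polyring N"
  by (simp add: polyring_def)

lemma polyring_diff [intro]: "p \<in> polyring N \<Longrightarrow> q \<in> polyring N \<Longrightarrow> p - q \<in> polyring N"
  using polyring_add[of p N "- q"] by auto

lemma polyring_Const [intro, simp]: "Const c \<in> polyring N"
  by (simp add: polyring_def)

lemma polyring_one [intro, simp]: "1 \<in> polyring N"
  by (simp add: polyring_def)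

lemma polyring_Var [intro]: "i < N \<Longrightarrow> Var i \<in> polyring N"
  using vars_Var[of i] by (auto simp: polyring_def)

lemma polyring_sum [intro]:
  "(\<And>i. i \<in> S \<Longrightarrow> f i \<in> polyring N) \<Longrightarrow> (\<Sum>i\<in>S. f i) \<in> polyring N"
  by (simp add: polyring_def vars_sum_subset)

lemma polyring_prod [intro]:
  "(\<And>i. i \<in> S \<Longrightarrow> f i \<in> polyring N) \<Longrightarrow> (\<Prod>i\<in>S. f i) \<in> polyring N"
  by (simp add: polyring_def vars_prod_subset)

lemma polyring_power [intro]: "p \<in> polyring N \<Longrightarrow> p ^ e \<in> polyring N"
  by (simp add: polyring_def vars_power_subset)

lemma polyring_esym [intro]:
  "(\<And>x. x \<in> set l \<Longrightarrow> x \<in> polyring N) \<Longrightarrow> esym r l \<in> polyring N"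
  by (simp add: polyring_def vars_esym_subset)

lemma ideal_genI:
  "finite F \<Longrightarrow> F \<subseteq> G \<Longrightarrow> (\<And>g. g \<in> F \<Longrightarrow> c g \<in> polyring N) \<Longrightarrow>
    (\<Sum>g\<in>F. c g * g) \<in> ideal_gen N G"
  unfolding ideal_gen_def by blast

lemma ideal_genE:
  assumes "p \<in> ideal_gen N G"
  obtains F c where "finite F" "F \<subseteq> G" "\<And>g. g \<in> F \<Longrightarrow> c g \<in> polyring N"
    "p = (\<Sum>g\<in>F. c g * g)"
  using assms unfolding ideal_gen_def by blast

lemma ideal_gen_zero [intro, simp]: "0 \<in> ideal_gen N G"
  using ideal_genI[of "{}" G] by simp

lemma ideal_gen_gen [intro]: "g \<in> G \<Longrightarrow> g \<in> ideal_gen N G"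
  using ideal_genI[of "{g}" G "\<lambda>_. 1" N] by simp

lemma ideal_gen_add [intro]:
  assumes "p \<in> ideal_gen N G" "q \<in> ideal_gen N G"
  shows "p + q \<in> ideal_gen N G"
proof -
  obtain F1 c1 where F1: "finite F1" "F1 \<subseteq> G" "\<And>g. g \<in> F1 \<Longrightarrow> c1 g \<in> polyring N"
    and p: "p = (\<Sum>g\<in>F1. c1 g * g)"
    using assms(1) by (rule ideal_genE) blast
  obtain F2 c2 where F2: "finite F2" "F2 \<subseteq> G" "\<And>g. g \<in> F2 \<Longrightarrow> c2 g \<in> polyring N"
    and q: "q = (\<Sum>g\<in>F2. c2 g * g)"
    using assms(2) by (rule ideal_genE) blast
  define c where "c g = (if g \<in> F1 then c1 g else 0) + (if g \<in> F2 then c2 g else 0)" for g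
  have fin: "finite (F1 \<union> F2)" using F1 F2 by blast
  have "p = (\<Sum>g\<in>F1 \<union> F2. (if g \<in> F1 then c1 g else 0) * g)"
    unfolding p by (rule sum.mono_neutral_cong_left[OF fin]) auto
  moreover have "q = (\<Sum>g\<in>F1 \<union> F2. (if g \<in> F2 then c2 g else 0) * g)"
    unfolding q by (rule sum.mono_neutral_cong_left[OF fin]) auto
  ultimately have "p + q = (\<Sum>g\<in>F1 \<union> F2. c g * g)"
    by (simp add: c_def distrib_right sum.distrib)
  also have "\<dots> \<in> ideal_gen N G"
    using F1 F2 by (intro ideal_genI) (auto simp: c_def)
  finally show ?thesis .
qed

lemma ideal_gen_mult [intro]:
  assumes "r \<in> polyring N" "p \<in> ideal_gen N G"
  shows "r * p \<in> ideal_gen N G"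
proof -
  obtain F c where F: "finite F" "F \<subseteq> G" "\<And>g. g \<in> F \<Longrightarrow> c g \<in> polyring N"
    and p: "p = (\<Sum>g\<in>F. c g * g)"
    using assms(2) by (rule ideal_genE) blast
  have "r * p = (\<Sum>g\<in>F. (r * c g) * g)"
    by (simp add: p sum_distrib_left mult.assoc)
  also have "\<dots> \<in> ideal_gen N G"
    using F assms(1) by (intro ideal_genI) auto
  finally show ?thesis .
qed

lemma ideal_gen_mult_right [intro]:
  "r \<in> polyring N \<Longrightarrow> p \<in> ideal_gen N G \<Longrightarrow> p * r \<in> ideal_gen N G"
  using ideal_gen_mult[of r N p G] by (simp add: mult.commute)

lemma ideal_gen_uminus [intro]: "p \<in> ideal_gen N G \<Longrightarrow> - p \<in> ideal_gen N G"
  using ideal_gen_mult[OF polyring_uminus[OF polyring_one]] by simp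

lemma ideal_gen_diff [intro]:
  "p \<in> ideal_gen N G \<Longrightarrow> q \<in> ideal_gen N G \<Longrightarrow> p - q \<in> ideal_gen N G"
  using ideal_gen_add[of p N G "- q"] ideal_gen_uminus[of q N G] by simp

lemma ideal_gen_sum [intro]:
  "(\<And>i. i \<in> S \<Longrightarrow> f i \<in> ideal_gen N G) \<Longrightarrow> (\<Sum>i\<in>S. f i) \<in> ideal_gen N G"
  by (induction S rule: infinite_finite_induct) auto

lemma ideal_gen_subset_polyring:
  assumes "G \<subseteq> polyring N"
  shows "ideal_gen N G \<subseteq> polyring N"
proof
  fix p assume "p \<in> ideal_gen N G"
  then obtain F c where "F \<subseteq> G" "\<And>g. g \<in> F \<Longrightarrow> c g \<in> polyring N" "p = (\<Sum>g\<in>F. c g * g)"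
    by (rule ideal_genE) blast
  then show "p \<in> polyring N"
    using assms by (auto intro!: polyring_sum polyring_mult)
qed

lemma ideal_gen_subset_vanishing_ideal:
  assumes "G \<subseteq> polyring N" and "\<And>g z. g \<in> G \<Longrightarrow> z \<in> Z \<Longrightarrow> eval g z = 0"
  shows "ideal_gen N G \<subseteq> vanishing_ideal N Z"
proof
  fix p assume p: "p \<in> ideal_gen N G"
  then obtain F c where "F \<subseteq> G" "p = (\<Sum>g\<in>F. c g * g)"
    by (rule ideal_genE) blast
  then have "eval p z = 0" if "z \<in> Z" for z
    using assms(2) that by (auto simp: eval_sum eval_mult intro!: sum.neutral)
  then show "p \<in> vanishing_ideal N Z"
    using p ideal_gen_subset_polyring[OF assms(1)] by (auto simp: vanishing_ideal_def)
qed

lemma Const_add: "Const (a + b) = Const a + Const b"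
  by (simp add: Const_def single_add)

lemma Const_mult: "Const (a * b) = Const a * Const b"
  by (simp add: Const_def mult_single)

lemma Const_zero [simp]: "Const 0 = 0"
  by (simp add: Const_def)

lemma Const_one [simp]: "Const 1 = 1"
  by (simp add: Const_def one_poly_mapping.abs_eq[symmetric])

lemma Const_uminus: "Const (- a) = - Const a"
  by (simp add: Const_def single_uminus)

lemma Const_sum: "Const (\<Sum>i\<in>S. f i) = (\<Sum>i\<in>S. Const (f i))"
  by (induction S rule: infinite_finite_induct) (auto simp: Const_add)

lemma Const_prod: "Const (\<Prod>i\<in>S. f i) = (\<Prod>i\<in>S. Const (f i))"
  by (induction S rule: infinite_finite_induct) (auto simp: Const_mult)

lemma Const_power: "Const (a ^ e) = Const a ^ e"
  by (induction e) (auto simp: Const_mult)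

lemma ideal_gen_Const_mult_cancel:
  assumes "c \<noteq> 0" "Const c * p \<in> ideal_gen N G"
  shows "p \<in> ideal_gen N G"
proof -
  have "Const (inverse c) * (Const c * p) \<in> ideal_gen N G"
    using assms(2) by (rule ideal_gen_mult[OF polyring_Const])
  then show ?thesis
    using assms(1) by (simp add: mult.assoc[symmetric] Const_mult[symmetric])
qed

lemma Var_power: "Var i ^ e = Poly_Mapping.single (Poly_Mapping.single i e) 1"
  by (induction e)
     (auto simp: Var_def mult_single single_add[symmetric] one_poly_mapping.abs_eq[symmetric])

lemma single_one_eq_prod_Var_power:
  "Poly_Mapping.single m 1 = (\<Prod>i\<in>Poly_Mapping.keys m. Var i ^ Poly_Mapping.lookup m i)"
proof -
  have prod_single: "finite S \<Longrightarrow>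
      (\<Prod>i\<in>S. Poly_Mapping.single (f i) (1::rat)) = Poly_Mapping.single (\<Sum>i\<in>S. f i) 1" for S f
    by (induction S rule: finite_induct) (auto simp: mult_single one_poly_mapping.abs_eq[symmetric])
  have "(\<Sum>i\<in>Poly_Mapping.keys m. Poly_Mapping.single i (Poly_Mapping.lookup m i)) = m"
    by (rule poly_mapping_sum_single[symmetric])
  then show ?thesis by (simp add: Var_power prod_single)
qed

lemma mpoly_eq_sum_monomials:
  "p = (\<Sum>m\<in>Poly_Mapping.keys p. Const (Poly_Mapping.lookup p m) *
          (\<Prod>i\<in>Poly_Mapping.keys m. Var i ^ Poly_Mapping.lookup m i))"
proof -
  have single: "Poly_Mapping.single m c =
      Const c * (\<Prod>i\<in>Poly_Mapping.keys m. Var i ^ Poly_Mapping.lookup m i)" for m c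
    by (simp add: Const_def mult_single flip: single_one_eq_prod_Var_power)
  have "p = (\<Sum>m\<in>Poly_Mapping.keys p. Poly_Mapping.single m (Poly_Mapping.lookup p m))"
    by (rule poly_mapping_sum_single)
  also have "\<dots> = (\<Sum>m\<in>Poly_Mapping.keys p. Const (Poly_Mapping.lookup p m) *
          (\<Prod>i\<in>Poly_Mapping.keys m. Var i ^ Poly_Mapping.lookup m i))"
    by (simp only: single)
  finally show ?thesis .
qed

section \<open>Congruences modulo colon ideals\<close>

text \<open>\<open>colon_cong N G E u v\<close> means \<open>u \<equiv> v\<close> modulo the colon ideal \<open>I : E = {f. E f \<in> I}\<close>
  of \<open>I = ideal_gen N G\<close>.\<close>

definition colon_cong :: "nat \<Rightarrow> mpoly set \<Rightarrow> mpoly \<Rightarrow> mpoly \<Rightarrow> mpoly \<Rightarrow> bool" where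
  "colon_cong N G E u v \<longleftrightarrow> E * (u - v) \<in> ideal_gen N G"

lemma colon_cong_refl: "colon_cong N G E u u"
  by (simp add: colon_cong_def)

lemma colon_cong_add:
  assumes "colon_cong N G E u v" "colon_cong N G E u' v'"
  shows "colon_cong N G E (u + u') (v + v')"
proof -
  have "E * (u + u' - (v + v')) = E * (u - v) + E * (u' - v')"
    by (simp add: algebra_simps)
  then show ?thesis
    using assms unfolding colon_cong_def by auto
qed

lemma colon_cong_diff:
  assumes "colon_cong N G E u v" "colon_cong N G E u' v'"
  shows "colon_cong N G E (u - u') (v - v')"
proof -
  have "E * (u - u' - (v - v')) = E * (u - v) - E * (u' - v')"
    by (simp add: algebra_simps)
  then show ?thesis
    using assms unfolding colon_cong_def by auto
qed

lemma colon_cong_mult: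
  assumes "colon_cong N G E u v" "colon_cong N G E u' v'" "u' \<in> polyring N" "v \<in> polyring N"
  shows "colon_cong N G E (u * u') (v * v')"
proof -
  have "E * (u * u' - v * v') = (E * (u - v)) * u' + v * (E * (u' - v'))"
    by (simp add: algebra_simps)
  then show ?thesis
    using assms unfolding colon_cong_def by auto
qed

lemma colon_cong_sum:
  "(\<And>i. i \<in> S \<Longrightarrow> colon_cong N G E (u i) (v i)) \<Longrightarrow>
    colon_cong N G E (\<Sum>i\<in>S. u i) (\<Sum>i\<in>S. v i)"
  by (induction S rule: infinite_finite_induct) (auto simp: colon_cong_refl colon_cong_add)

lemma colon_cong_prod:
  "(\<And>i. i \<in> S \<Longrightarrow> colon_cong N G E (u i) (v i)) \<Longrightarrow>
   (\<And>i. i \<in> S \<Longrightarrow> u i \<in> polyring N) \<Longrightarrow> (\<And>i. i \<in> S \<Longrightarrow> v i \<in> polyring N) \<Longrightarrow>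
    colon_cong N G E (\<Prod>i\<in>S. u i) (\<Prod>i\<in>S. v i)"
proof (induction S rule: infinite_finite_induct)
  case (insert x F)
  have IH: "colon_cong N G E (prod u F) (prod v F)"
    by (rule insert.IH) (use insert.prems in auto)
  have "colon_cong N G E (u x * prod u F) (v x * prod v F)"
    using insert.prems by (intro colon_cong_mult[OF _ IH] polyring_prod) auto
  then show ?case
    using insert.hyps by simp
qed (auto simp: colon_cong_refl)

lemma colon_cong_power:
  "colon_cong N G E u v \<Longrightarrow> u \<in> polyring N \<Longrightarrow> v \<in> polyring N \<Longrightarrow>
    colon_cong N G E (u ^ e) (v ^ e)"
  using colon_cong_prod[of "{..<e}" N G E "\<lambda>_. u" "\<lambda>_. v"] by simp

lemma colon_cong_mult_left:
  "colon_cong N G E u v \<Longrightarrow> F \<in> polyring N \<Longrightarrow> colon_cong N G (F * E) u v"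
  unfolding colon_cong_def by (simp add: ideal_gen_mult mult.assoc)

lemma colon_cong_ideal_gen:
  assumes "colon_cong N G E u v" "E * u \<in> ideal_gen N G"
  shows "E * v \<in> ideal_gen N G"
proof -
  have "E * v = E * u - E * (u - v)"
    by (simp add: algebra_simps)
  then show ?thesis
    using assms unfolding colon_cong_def by auto
qed

lemma ideal_gen_if_colon_cong_Const:
  assumes "colon_cong N G E g (Const c)" "g \<in> ideal_gen N G" "c \<noteq> 0" "E \<in> polyring N"
  shows "E \<in> ideal_gen N G"
proof -
  have "E * g \<in> ideal_gen N G"
    by (rule ideal_gen_mult[OF assms(4,2)])
  then have "E * Const c \<in> ideal_gen N G"
    by (rule colon_cong_ideal_gen[OF assms(1)])
  then have "Const c * E \<in> ideal_gen N G"
    by (simp only: mult.commute)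
  then show ?thesis
    by (rule ideal_gen_Const_mult_cancel[OF assms(3)])
qed

lemma colon_cong_eval:
  assumes "p \<in> polyring N"
    and "\<And>i. i \<in> vars p \<Longrightarrow> colon_cong N G E (Var i) (Const (z i))"
  shows "colon_cong N G E p (Const (eval p z))"
proof -
  have monomial: "colon_cong N G E (\<Prod>i\<in>Poly_Mapping.keys m. Var i ^ Poly_Mapping.lookup m i)
      (Const (eval_monomial m z))" if "m \<in> Poly_Mapping.keys p" for m
  proof -
    have "Poly_Mapping.keys m \<subseteq> vars p" "vars p \<subseteq> {..<N}"
      using that assms(1) by (auto simp: vars_def polyring_def)
    then show ?thesis
      unfolding eval_monomial_def Const_prod Const_power
      by (intro colon_cong_prod colon_cong_power assms(2) polyring_power polyring_Var) auto
  qed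
  have "colon_cong N G E
      (\<Sum>m\<in>Poly_Mapping.keys p. Const (Poly_Mapping.lookup p m) *
          (\<Prod>i\<in>Poly_Mapping.keys m. Var i ^ Poly_Mapping.lookup m i))
      (\<Sum>m\<in>Poly_Mapping.keys p. Const (Poly_Mapping.lookup p m) * Const (eval_monomial m z))"
    using monomial assms(1) unfolding polyring_def
    by (intro colon_cong_sum colon_cong_mult colon_cong_refl polyring_Const polyring_prod
        polyring_power polyring_Var) (auto simp: vars_def)
  then show ?thesis
    by (simp flip: mpoly_eq_sum_monomials Const_mult Const_sum add: eval_def eval_monomial_def)
qed

section \<open>Elementary and complete homogeneous symmetric functions\<close>

definition subsets_of_card :: "nat \<Rightarrow> nat \<Rightarrow> nat set set" where
  "subsets_of_card L r = {S. S \<subseteq> {..<L} \<and> card S = r}"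

lemma finite_subsets_of_card [simp]: "finite (subsets_of_card L r)"
  unfolding subsets_of_card_def by (rule finite_subset[of _ "Pow {..<L}"]) auto

lemma esym_altdef: "esym r l = (\<Sum>S\<in>subsets_of_card (length l) r. \<Prod>i\<in>S. l ! i)"
  by (simp add: esym_def subsets_of_card_def)

lemma esym_0 [simp]: "esym 0 l = 1"
proof -
  have "subsets_of_card (length l) 0 = {{}}"
    unfolding subsets_of_card_def using finite_subset[OF _ finite_lessThan]
    by (auto simp: card_eq_0_iff)
  then show ?thesis by (simp add: esym_altdef)
qed

lemma esym_eq_0: "length l < r \<Longrightarrow> esym r l = 0"
proof -
  assume "length l < r"
  then have "S \<notin> subsets_of_card (length l) r" for S
    using card_mono[OF finite_lessThan, of S "length l"] by (auto simp: subsets_of_card_def)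
  then have "subsets_of_card (length l) r = {}" by blast
  then show ?thesis by (simp add: esym_altdef)
qed

lemma subsets_of_card_Suc:
  "subsets_of_card (Suc L) (Suc r) = subsets_of_card L (Suc r) \<union> insert L ` subsets_of_card L r"
proof (intro equalityI subsetI)
  fix S assume S: "S \<in> subsets_of_card (Suc L) (Suc r)"
  then have "finite S" by (auto simp: subsets_of_card_def intro: finite_subset[of _ "{..<Suc L}"])
  show "S \<in> subsets_of_card L (Suc r) \<union> insert L ` subsets_of_card L r"
  proof (cases "L \<in> S")
    case True
    then have "S = insert L (S - {L})" "S - {L} \<in> subsets_of_card L r"
      using S \<open>finite S\<close> by (auto simp: subsets_of_card_def)
    then show ?thesis by blast
  next
    case False
    then show ?thesis using S by (auto simp: subsets_of_card_def less_Suc_eq)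
  qed
next
  fix S assume "S \<in> subsets_of_card L (Suc r) \<union> insert L ` subsets_of_card L r"
  then show "S \<in> subsets_of_card (Suc L) (Suc r)"
  proof
    assume "S \<in> insert L ` subsets_of_card L r"
    then obtain T where T: "T \<in> subsets_of_card L r" "S = insert L T" by blast
    then have "finite T" "L \<notin> T"
      by (auto simp: subsets_of_card_def intro: finite_subset[of _ "{..<L}"])
    then show ?thesis using T by (auto simp: subsets_of_card_def)
  qed (auto simp: subsets_of_card_def)
qed

lemma esym_Suc_snoc: "esym (Suc r) (l @ [x]) = esym (Suc r) l + x * esym r l"
proof -
  let ?L = "length l" and ?f = "\<lambda>S. \<Prod>i\<in>S. (l @ [x]) ! i"
  have small: "?f S = (\<Prod>i\<in>S. l ! i)" if "S \<subseteq> {..<?L}" for S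
    using that by (intro prod.cong) (auto simp: nth_append)
  have disjoint: "subsets_of_card ?L (Suc r) \<inter> insert ?L ` subsets_of_card ?L r = {}"
    by (auto simp: subsets_of_card_def)
  have inj: "inj_on (insert ?L) (subsets_of_card ?L r)"
  proof (rule inj_onI)
    fix S T assume "S \<in> subsets_of_card ?L r" "T \<in> subsets_of_card ?L r"
      and eq: "insert ?L S = insert ?L T"
    then have "?L \<notin> S" "?L \<notin> T" by (auto simp: subsets_of_card_def)
    then show "S = T" using eq by (metis Diff_insert_absorb)
  qed
  have "esym (Suc r) (l @ [x]) =
      (\<Sum>S\<in>subsets_of_card ?L (Suc r). ?f S) + (\<Sum>S\<in>insert ?L ` subsets_of_card ?L r. ?f S)"
    unfolding esym_altdef length_append_singleton subsets_of_card_Suc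
    by (rule sum.union_disjoint) (simp_all add: disjoint)
  also have "(\<Sum>S\<in>insert ?L ` subsets_of_card ?L r. ?f S) = (\<Sum>S\<in>subsets_of_card ?L r. ?f (insert ?L S))"
    by (rule sum.reindex[OF inj, unfolded comp_def])
  also have "\<dots> = x * esym r l"
  proof -
    have "?f (insert ?L S) = x * (\<Prod>i\<in>S. l ! i)" if "S \<in> subsets_of_card ?L r" for S
    proof -
      have "finite S" "?L \<notin> S" "S \<subseteq> {..<?L}"
        using that by (auto simp: subsets_of_card_def intro: finite_subset[of _ "{..<?L}"])
      then show ?thesis by (simp add: small)
    qed
    then show ?thesis by (simp add: esym_altdef sum_distrib_left)
  qed
  also have "(\<Sum>S\<in>subsets_of_card ?L (Suc r). ?f S) = esym (Suc r) l"
    by (simp add: esym_altdef small subsets_of_card_def)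
  finally show ?thesis .
qed

definition weak_compositions :: "nat \<Rightarrow> nat \<Rightarrow> (nat \<Rightarrow> nat) set" where
  "weak_compositions L r = {f. (\<forall>i. i \<ge> L \<longrightarrow> f i = 0) \<and> (\<Sum>i<L. f i) = r}"

lemma finite_weak_compositions [simp]: "finite (weak_compositions L r)"
proof -
  have "weak_compositions L r \<subseteq> (\<lambda>g i. if i < L then g i else 0) ` (PiE {..<L} (\<lambda>_. {..r}))"
  proof
    fix f assume f: "f \<in> weak_compositions L r"
    then have "f = (\<lambda>i. if i < L then restrict f {..<L} i else 0)"
      by (auto simp: weak_compositions_def)
    moreover have "restrict f {..<L} \<in> PiE {..<L} (\<lambda>_. {..r})"
      using f member_le_sum[of _ "{..<L}" f] by (auto simp: weak_compositions_def)
    ultimately show "f \<in> (\<lambda>g i. if i < L then g i else 0) ` (PiE {..<L} (\<lambda>_. {..r}))"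
      by blast
  qed
  then show ?thesis by (rule finite_subset) (auto intro: finite_PiE)
qed

lemma hsym_altdef: "hsym r l = (\<Sum>f\<in>weak_compositions (length l) r. \<Prod>i<length l. (l ! i) ^ f i)"
  by (simp add: hsym_def weak_compositions_def)

lemma hsym_Nil: "hsym r [] = (if r = 0 then 1 else 0)"
proof -
  have "weak_compositions 0 r = (if r = 0 then {\<lambda>_. 0} else {})"
    by (auto simp: weak_compositions_def)
  then show ?thesis by (simp add: hsym_altdef)
qed

lemma hsym_snoc: "hsym j (l @ [x]) = (\<Sum>i\<le>j. hsym i l * x ^ (j - i))"
proof -
  let ?L = "length l"
  let ?T = "Sigma {..j} (weak_compositions ?L)"
  have "(\<Sum>i\<le>j. hsym i l * x ^ (j - i)) =
      (\<Sum>(i, g)\<in>?T. (\<Prod>k<?L. (l ! k) ^ g k) * x ^ (j - i))"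
    by (simp add: hsym_altdef sum_distrib_right sum.Sigma)
  also have "\<dots> = (\<Sum>f\<in>weak_compositions (Suc ?L) j. \<Prod>k<Suc ?L. ((l @ [x]) ! k) ^ f k)"
  proof (rule sum.reindex_bij_witness[where i = "\<lambda>f. (j - f ?L, f(?L := 0))"
        and j = "\<lambda>(i, g). g(?L := j - i)"])
    fix a assume "a \<in> ?T"
    then obtain i g where ig: "a = (i, g)" "i \<le> j" "g \<in> weak_compositions ?L i" by auto
    then have g: "g ?L = 0" "(\<Sum>k<?L. g k) = i" by (auto simp: weak_compositions_def)
    show "(j - (case a of (i, g) \<Rightarrow> g(?L := j - i)) ?L,
        (case a of (i, g) \<Rightarrow> g(?L := j - i))(?L := 0)) = a"
      using ig g by auto
    show "(case a of (i, g) \<Rightarrow> g(?L := j - i)) \<in> weak_compositions (Suc ?L) j"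
      using ig g by (auto simp: weak_compositions_def sum.lessThan_Suc)
    show "(\<Prod>k<Suc ?L. ((l @ [x]) ! k) ^ (case a of (i, g) \<Rightarrow> g(?L := j - i)) k) =
        (case a of (i, g) \<Rightarrow> (\<Prod>k<?L. (l ! k) ^ g k) * x ^ (j - i))"
      using ig by (simp add: prod.lessThan_Suc nth_append)
  next
    fix f assume f: "f \<in> weak_compositions (Suc ?L) j"
    then have sum: "(\<Sum>k<?L. f k) + f ?L = j"
      by (simp add: weak_compositions_def sum.lessThan_Suc)
    show "(case (j - f ?L, f(?L := 0)) of (i, g) \<Rightarrow> g(?L := j - i)) = f"
      using sum by auto
    have "(\<Sum>k<?L. (f(?L := 0)) k) = (\<Sum>k<?L. f k)"
      by (rule sum.cong) auto
    then show "(j - f ?L, f(?L := 0)) \<in> ?T"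
      using f sum by (auto simp: weak_compositions_def)
  qed
  also have "\<dots> = hsym j (l @ [x])"
    by (simp add: hsym_altdef)
  finally show ?thesis by simp
qed

lemma esym_map_uminus: "esym j (map uminus l) = (-1) ^ j * esym j (l :: 'a::comm_ring_1 list)"
proof -
  have "(\<Prod>i\<in>S. map uminus l ! i) = (-1) ^ j * (\<Prod>i\<in>S. l ! i)"
    if "S \<in> subsets_of_card (length l) j" for S
  proof -
    have "(\<Prod>i\<in>S. map uminus l ! i) = (\<Prod>i\<in>S. - (l ! i))"
      using that by (intro prod.cong) (auto simp: subsets_of_card_def)
    then show ?thesis
      using that by (simp add: prod_uminus subsets_of_card_def)
  qed
  then show ?thesis by (simp add: esym_altdef sum_distrib_left)
qed

lemma prod_add_eq_sum_esym:
  fixes l :: "'a::comm_ring_1 list"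
  shows "(\<Prod>i<length l. l ! i + w) = (\<Sum>i\<le>length l. esym i l * w ^ (length l - i))"
proof -
  let ?L = "length l"
  have "(\<Prod>i<?L. l ! i + w) = (\<Sum>S\<in>Pow {..<?L}. (\<Prod>i\<in>S. l ! i) * (\<Prod>i\<in>{..<?L} - S. w))"
    by (rule prod_add) simp
  also have "\<dots> = (\<Sum>S\<in>Pow {..<?L}. (\<Prod>i\<in>S. l ! i) * w ^ (?L - card S))"
    by (intro sum.cong refl) (auto simp: card_Diff_subset finite_subset)
  also have "Pow {..<?L} = (\<Union>i\<in>{..?L}. subsets_of_card ?L i)"
  proof (intro equalityI subsetI)
    fix S assume "S \<in> Pow {..<?L}"
    then show "S \<in> (\<Union>i\<in>{..?L}. subsets_of_card ?L i)"
      using card_mono[OF finite_lessThan, of S ?L] by (auto simp: subsets_of_card_def)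
  qed (auto simp: subsets_of_card_def)
  also have "(\<Sum>S\<in>(\<Union>i\<in>{..?L}. subsets_of_card ?L i). (\<Prod>i\<in>S. l ! i) * w ^ (?L - card S)) =
      (\<Sum>i\<le>?L. \<Sum>S\<in>subsets_of_card ?L i. (\<Prod>i\<in>S. l ! i) * w ^ (?L - card S))"
    by (rule sum.UNION_disjoint) (auto simp: subsets_of_card_def)
  also have "\<dots> = (\<Sum>i\<le>?L. esym i l * w ^ (?L - i))"
    by (intro sum.cong refl) (simp add: esym_altdef sum_distrib_right subsets_of_card_def)
  finally show ?thesis .
qed

lemma prod_diff_eq_sum_esym:
  fixes l :: "'a::comm_ring_1 list"
  shows "(\<Prod>i<length l. w - l ! i) = (\<Sum>j\<le>length l. (-1) ^ j * w ^ (length l - j) * esym j l)"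
proof -
  have "(\<Prod>i<length l. w - l ! i) = (\<Prod>i<length (map uminus l). map uminus l ! i + w)"
    by (intro prod.cong) auto
  also have "\<dots> = (\<Sum>j\<le>length l. esym j (map uminus l) * w ^ (length l - j))"
    by (subst prod_add_eq_sum_esym) simp
  finally show ?thesis
    by (simp add: esym_map_uminus algebra_simps)
qed

section \<open>Generating functions\<close>

lemma prod_list_map_mset_eq:
  "mset u = mset u' \<Longrightarrow> prod_list (map f u) = (prod_list (map f u') :: 'a::comm_monoid_mult)"
  by (metis mset_map prod_mset_prod_list)

definition esym_fps :: "'a::comm_ring_1 list \<Rightarrow> 'a fps" where
  "esym_fps l = prod_list (map (\<lambda>a. 1 + fps_const a * fps_X) l)"

text \<open>\<open>geom_fps y = 1 / (1 + y X)\<close>, so that \<open>hsym_fps l = 1 / esym_fps l\<close>.\<close>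

definition geom_fps :: "'a::comm_ring_1 \<Rightarrow> 'a fps" where
  "geom_fps y = Abs_fps (\<lambda>i. (- y) ^ i)"

definition hsym_fps :: "'a::comm_ring_1 list \<Rightarrow> 'a fps" where
  "hsym_fps l = prod_list (map geom_fps l)"

lemma fps_mult_linear_nth:
  fixes F :: "'a::comm_ring_1 fps"
  shows "(F * (1 + fps_const c * fps_X)) $ n = F $ n + (if n = 0 then 0 else c * F $ (n - 1))"
proof -
  have "F * (1 + fps_const c * fps_X) = F + fps_const c * (fps_X * F)"
    by (simp add: algebra_simps)
  then show ?thesis by simp
qed

lemma esym_fps_nth: "esym_fps l $ r = esym r l"
proof (induction l arbitrary: r rule: rev_induct)
  case Nil
  then show ?case
    by (cases r) (auto simp: esym_fps_def esym_eq_0)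
next
  case (snoc x l)
  then show ?case
    by (cases r) (simp_all add: esym_fps_def fps_mult_linear_nth esym_Suc_snoc)
qed

lemma geom_fps_mult_linear: "geom_fps y * (1 + fps_const y * fps_X) = 1"
proof (rule fps_ext)
  fix n
  show "(geom_fps y * (1 + fps_const y * fps_X)) $ n = 1 $ n"
    by (cases n) (simp_all add: fps_mult_linear_nth geom_fps_def)
qed

lemma hsym_fps_mult_esym_fps: "hsym_fps l * esym_fps l = 1"
proof (induction l)
  case (Cons x l)
  have "hsym_fps (x # l) * esym_fps (x # l) =
      (geom_fps x * (1 + fps_const x * fps_X)) * (hsym_fps l * esym_fps l)"
    by (simp add: hsym_fps_def esym_fps_def algebra_simps)
  then show ?case
    using Cons by (simp add: geom_fps_mult_linear)
qed (simp add: hsym_fps_def esym_fps_def)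

lemma hsym_fps_nth: "hsym_fps l $ j = (-1) ^ j * hsym j l"
proof (induction l arbitrary: j rule: rev_induct)
  case Nil
  then show ?case by (cases j) (auto simp: hsym_fps_def hsym_Nil)
next
  case (snoc x l)
  have "hsym_fps (l @ [x]) $ j = (\<Sum>i\<le>j. hsym_fps l $ i * geom_fps x $ (j - i))"
    by (simp add: hsym_fps_def fps_mult_nth atLeast0AtMost)
  also have "\<dots> = (\<Sum>i\<le>j. (-1) ^ j * (hsym i l * x ^ (j - i)))"
  proof (intro sum.cong refl)
    fix i assume "i \<in> {..j}"
    then have "(-1::'a) ^ i * (-1) ^ (j - i) = (-1) ^ j"
      by (simp flip: power_add)
    then show "hsym_fps l $ i * geom_fps x $ (j - i) = (-1) ^ j * (hsym i l * x ^ (j - i))"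
      by (simp add: snoc geom_fps_def power_minus[of x] algebra_simps)
  qed
  also have "\<dots> = (-1) ^ j * hsym j (l @ [x])"
    by (simp add: hsym_snoc sum_distrib_left)
  finally show ?case .
qed

text \<open>\<open>esym_diff r u v\<close> is the elementary symmetric function \<open>e\<^sub>r\<close> of the formal difference
  of the alphabets \<open>u\<close> and \<open>v\<close>: the coefficient of \<open>X\<^sup>r\<close> in \<open>esym_fps u / esym_fps v\<close>.\<close>

definition esym_diff :: "nat \<Rightarrow> 'a::comm_ring_1 list \<Rightarrow> 'a list \<Rightarrow> 'a" where
  "esym_diff r u v = (\<Sum>j\<le>r. (-1) ^ j * esym (r - j) u * hsym j v)"

lemma hsym_fps_mult_esym_fps_nth: "(hsym_fps v * esym_fps u) $ r = esym_diff r u v"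
  unfolding esym_diff_def fps_mult_nth atLeast0AtMost
  by (intro sum.cong refl) (simp add: hsym_fps_nth esym_fps_nth)

lemma eval_esym_diff:
  "eval (esym_diff r u v) z = esym_diff r (map (\<lambda>p. eval p z) u) (map (\<lambda>p. eval p z) v)"
  by (simp add: esym_diff_def eval_sum eval_mult eval_power eval_uminus eval_esym eval_hsym)

lemma vars_esym_diff_subset:
  "(\<And>x. x \<in> set u \<Longrightarrow> vars x \<subseteq> V) \<Longrightarrow> (\<And>x. x \<in> set v \<Longrightarrow> vars x \<subseteq> V) \<Longrightarrow>
    vars (esym_diff r u v) \<subseteq> V"
  unfolding esym_diff_def by (intro vars_sum_subset vars_mult_subset vars_power_subset vars_esym_subset vars_hsym_subset) auto

lemma polyring_esym_diff [intro]:
  "(\<And>x. x \<in> set u \<Longrightarrow> x \<in> polyring N) \<Longrightarrow> (\<And>x. x \<in> set v \<Longrightarrow> x \<in> polyring N) \<Longrightarrow>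
    esym_diff r u v \<in> polyring N"
  unfolding polyring_def mem_Collect_eq by (rule vars_esym_diff_subset)

lemma esym_diff_eq_0_if_subset:
  fixes u v :: "'a::comm_ring_1 list"
  assumes "mset v \<subseteq># mset u" "r > length u - length v"
  shows "esym_diff r u v = 0"
proof -
  obtain w where w: "mset w = mset u - mset v"
    using ex_mset by blast
  then have "mset u = mset (v @ w)"
    using assms(1) by (simp add: subset_mset.add_diff_inverse)
  then have "hsym_fps v * esym_fps u = (hsym_fps v * esym_fps v) * esym_fps w"
    unfolding esym_fps_def by (simp add: prod_list_map_mset_eq[of u "v @ w"] mult.assoc)
  then have "hsym_fps v * esym_fps u = esym_fps w"
    by (simp add: hsym_fps_mult_esym_fps)
  moreover have "length w = length u - length v"
    using w assms(1) by (metis size_Diff_submset size_mset)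
  ultimately show ?thesis
    using assms(2) hsym_fps_mult_esym_fps_nth[of v u r] by (simp add: esym_fps_nth esym_eq_0)
qed

lemma prod_diff_eq_sum_esym_diff:
  fixes u v w :: "'a::comm_ring_1 list"
  assumes "mset v = add_mset y (mset w)"
  shows "(\<Prod>i<length u. u ! i - y) =
    (\<Sum>i\<le>length u. esym_diff i u v * esym (length u - i) w)"
proof -
  have "hsym_fps v = geom_fps y * hsym_fps w"
    using prod_list_map_mset_eq[of v "y # w" geom_fps] assms by (simp add: hsym_fps_def)
  then have "(hsym_fps v * esym_fps u) * esym_fps w =
      esym_fps u * geom_fps y * (hsym_fps w * esym_fps w)"
    by (simp add: mult_ac)
  then have product: "esym_fps u * geom_fps y = (hsym_fps v * esym_fps u) * esym_fps w"
    by (simp add: hsym_fps_mult_esym_fps)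
  have "(\<Prod>i<length u. u ! i - y) = (\<Prod>i<length u. u ! i + (- y))"
    by simp
  also have "\<dots> = (esym_fps u * geom_fps y) $ length u"
    by (subst prod_add_eq_sum_esym) (simp add: fps_mult_nth atLeast0AtMost esym_fps_nth geom_fps_def)
  also have "\<dots> = ((hsym_fps v * esym_fps u) * esym_fps w) $ length u"
    by (simp only: product)
  also have "\<dots> = (\<Sum>i=0..length u. (hsym_fps v * esym_fps u) $ i * esym_fps w $ (length u - i))"
    by (rule fps_mult_nth)
  also have "\<dots> = (\<Sum>i\<le>length u. esym_diff i u v * esym (length u - i) w)"
    by (simp only: hsym_fps_mult_esym_fps_nth esym_fps_nth atLeast0AtMost)
  finally show ?thesis .
qed

section \<open>Recovering a submultiset from the vanishing of \<open>esym_diff\<close>\<close>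

definition esym_poly :: "'a::comm_ring_1 list \<Rightarrow> 'a poly" where
  "esym_poly u = prod_list (map (\<lambda>a. [:1, a:]) u)"

lemma esym_poly_Cons: "esym_poly (a # u) = [:1, a:] * esym_poly u"
  by (simp add: esym_poly_def del: mult_pCons_left)

lemma fps_of_poly_esym_poly: "fps_of_poly (esym_poly u) = esym_fps u"
proof (induction u)
  case (Cons a u)
  have linear: "fps_of_poly [:1, a:] = 1 + fps_const a * fps_X"
    by (rule fps_ext) (simp add: fps_of_poly_nth coeff_pCons split: nat.split)
  have "esym_fps (a # u) = (1 + fps_const a * fps_X) * esym_fps u"
    by (simp add: esym_fps_def)
  then show ?case
    using Cons by (simp only: esym_poly_Cons fps_of_poly_mult linear)
qed (simp add: esym_poly_def esym_fps_def)

lemma poly_esym_poly: "poly (esym_poly u) t = (\<Prod>a\<leftarrow>u. 1 + a * t)"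
  by (induction u) (simp_all add: esym_poly_def algebra_simps del: mult_pCons_left)

lemma esym_poly_nonzero: "esym_poly (u :: 'a::idom list) \<noteq> 0"
  by (induction u) (simp_all add: esym_poly_def del: mult_pCons_left)

lemma degree_esym_poly_le: "degree (esym_poly (u :: 'a::idom list)) \<le> length u"
proof (induction u)
  case (Cons a u)
  have "degree (esym_poly (a # u)) \<le> degree [:1, a:] + degree (esym_poly u)"
    unfolding esym_poly_Cons by (rule degree_mult_le)
  also have "\<dots> \<le> 1 + length u"
    using Cons by simp
  finally show ?case by simp
qed (simp add: esym_poly_def)

lemma degree_esym_poly: "0 \<notin> set u \<Longrightarrow> degree (esym_poly (u :: 'a::idom list)) = length u"
proof (induction u)
  case (Cons a u)
  then show ?case
    by (simp add: esym_poly_Cons degree_mult_eq esym_poly_nonzero del: mult_pCons_left)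
qed (simp add: esym_poly_def)

text \<open>An entry \<open>0\<close> contributes the factor \<open>1\<close> to \<open>esym_poly\<close>; it is detected by the degree
  instead of by a root.\<close>

lemma mem_if_esym_poly_eq_mult:
  fixes u :: "'a::field list"
  assumes eq: "esym_poly u = G * [:1, y:]" and deg: "degree G < length u"
  shows "y \<in> set u"
proof (cases "y = 0")
  case False
  then have "poly (esym_poly u) (- 1 / y) = 0"
    by (simp add: eq)
  then obtain a where "a \<in> set u" "1 + a * (- 1 / y) = 0"
    by (auto simp: poly_esym_poly prod_list_zero_iff)
  then show ?thesis
    using False by (simp add: field_simps)
next
  case True
  show ?thesis
  proof (rule ccontr)
    assume "y \<notin> set u"
    then have "degree (esym_poly u) = length u"
      using True by (simp add: degree_esym_poly)
    then show False
      using eq deg True by (simp add: one_pCons[symmetric])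
  qed
qed

lemma mset_subset_if_esym_poly_eq_mult:
  fixes v :: "'a::field list"
  shows "esym_poly u = G * esym_poly v \<Longrightarrow> degree G + length v \<le> length u \<Longrightarrow>
    mset v \<subseteq># mset u"
proof (induction v arbitrary: u G)
  case (Cons y v)
  have eq: "esym_poly u = (G * esym_poly v) * [:1, y:]"
    using Cons.prems(1) by (simp add: esym_poly_Cons algebra_simps del: mult_pCons_left)
  have "degree (G * esym_poly v) < length u"
    using Cons.prems(2) degree_mult_le[of G "esym_poly v"] degree_esym_poly_le[of v] by simp
  then have y: "y \<in> set u"
    using mem_if_esym_poly_eq_mult[OF eq] by blast
  let ?u' = "remove1 y u"
  have mset_u: "mset u = add_mset y (mset ?u')"
    using y by simp
  then have "esym_poly u = [:1, y:] * esym_poly ?u'"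
    unfolding esym_poly_def using prod_list_map_mset_eq[of u "y # ?u'" "\<lambda>a. [:1, a:]"]
    by (simp del: mult_pCons_left)
  then have "[:1, y:] * esym_poly ?u' = [:1, y:] * (G * esym_poly v)"
    using eq by (metis mult.commute)
  then have "esym_poly ?u' = G * esym_poly v"
    by (simp del: mult_pCons_left)
  moreover have "length ?u' = length u - 1"
    using y by (simp add: length_remove1)
  ultimately have "mset v \<subseteq># mset ?u'"
    using Cons.IH[of ?u' G] Cons.prems(2) by simp
  then show ?case
    by (simp only: mset.simps mset_u mset_subset_eq_add_mset_cancel)
qed simp

text \<open>If the coefficients vanish, \<open>esym_fps u / esym_fps v\<close> is a polynomial \<open>G\<close> of degree at most
  \<open>length u - length v\<close>, and \<open>esym_poly u = G * esym_poly v\<close>.\<close>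

theorem esym_diff_eq_0_iff_subset:
  fixes u v :: "'a::field list"
  assumes "length v \<le> length u"
  shows "(\<forall>r > length u - length v. esym_diff r u v = 0) \<longleftrightarrow> mset v \<subseteq># mset u"
proof
  assume vanish: "\<forall>r > length u - length v. esym_diff r u v = 0"
  define L where "L = length u - length v"
  define F where "F = hsym_fps v * esym_fps u"
  define G where "G = (\<Sum>i\<le>L. monom (F $ i) i)"
  have coeff_G: "coeff G n = (if n \<le> L then F $ n else 0)" for n
    by (simp add: G_def coeff_sum coeff_monom)
  have "fps_of_poly G = F"
    by (rule fps_ext) (use vanish in \<open>auto simp: coeff_G F_def L_def fps_of_poly_nth
        hsym_fps_mult_esym_fps_nth\<close>)
  moreover have "F * esym_fps v = esym_fps u"
    by (metis F_def hsym_fps_mult_esym_fps mult.commute mult.left_commute mult_1_right)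
  ultimately have "esym_poly u = G * esym_poly v"
    by (simp flip: fps_of_poly_eq_iff add: fps_of_poly_esym_poly fps_of_poly_mult)
  moreover have "degree G \<le> L"
    by (rule degree_le) (simp add: coeff_G)
  ultimately show "mset v \<subseteq># mset u"
    using assms by (intro mset_subset_if_esym_poly_eq_mult[of u G v]) (simp_all add: L_def)
qed (simp add: esym_diff_eq_0_if_subset)

lemma mset_subset_eq_if_distinct_subset:
  assumes "distinct v" "set v \<subseteq> set u"
  shows "mset v \<subseteq># mset u"
proof -
  have "mset v = mset_set (set v)"
    using assms(1) by (simp add: mset_set_set)
  also have "\<dots> \<subseteq># mset_set (set u)"
    using assms(2) by (rule subset_imp_msubset_mset_set) simp
  also have "\<dots> \<subseteq># mset u"
    using mset_set_set_mset_msubset[of "mset u"] by simp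
  finally show ?thesis .
qed

lemma distinct_if_mset_subset_eq:
  assumes "mset v \<subseteq># mset u" "distinct u"
  shows "distinct v"
proof -
  obtain w where "mset u = mset (v @ w)"
    using assms(1) by (metis ex_mset mset_append subset_mset.less_eqE)
  then show ?thesis
    using assms(2) mset_eq_imp_distinct_iff[of u "v @ w"] by simp
qed

section \<open>Lagrange interpolation\<close>

definition lagrange_basis :: "'a::field set \<Rightarrow> 'a \<Rightarrow> 'a poly" where
  "lagrange_basis A c = smult (inverse (\<Prod>c'\<in>A - {c}. c - c')) (\<Prod>c'\<in>A - {c}. [:- c', 1:])"

lemma poly_lagrange_basis:
  assumes "finite A" "c \<in> A" "x \<in> A"
  shows "poly (lagrange_basis A c) x = (if x = c then 1 else 0)"
proof (cases "x = c")
  case True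
  have "(\<Prod>c'\<in>A - {c}. c - c') \<noteq> 0"
    using assms by (simp add: prod_zero_iff)
  then show ?thesis
    using True by (simp add: lagrange_basis_def poly_prod)
next
  case False
  then have "(\<Prod>c'\<in>A - {c}. x - c') = 0"
    using assms by (auto simp: prod_zero_iff)
  then show ?thesis
    using False by (simp add: lagrange_basis_def poly_prod)
qed

lemma degree_lagrange_basis: "finite A \<Longrightarrow> degree (lagrange_basis A c) \<le> card (A - {c})"
proof -
  assume "finite A"
  have "degree (lagrange_basis A c) \<le> degree (\<Prod>c'\<in>A - {c}. [:- c', 1:])"
    unfolding lagrange_basis_def by (rule degree_smult_le)
  also have "\<dots> \<le> sum (degree \<circ> (\<lambda>c'. [:- c', 1:])) (A - {c})"
    by (rule degree_prod_sum_le) (use \<open>finite A\<close> in simp)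
  finally show ?thesis by simp
qed

text \<open>The difference \<open>q\<close> of both sides has degree less than \<open>card A\<close> but vanishes on \<open>A\<close>.\<close>

lemma sum_lagrange_basis:
  assumes "finite A" "A \<noteq> {}"
  shows "(\<Sum>c\<in>A. lagrange_basis A c) = 1"
proof (rule ccontr)
  define q where "q = (\<Sum>c\<in>A. lagrange_basis A c) - 1"
  assume "(\<Sum>c\<in>A. lagrange_basis A c) \<noteq> 1"
  then have "q \<noteq> 0" by (simp add: q_def)
  have "degree (lagrange_basis A c) \<le> card A - 1" if "c \<in> A" for c
    using degree_lagrange_basis[OF assms(1), of c] that by (simp add: card_Diff_singleton)
  then have "degree (\<Sum>c\<in>A. lagrange_basis A c) \<le> card A - 1"
    by (intro degree_sum_le[OF assms(1)])
  moreover have "0 < card A"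
    using assms by (simp add: card_gt_0_iff)
  ultimately have "degree q < card A"
    using degree_diff_le[of "\<Sum>c\<in>A. lagrange_basis A c" "card A - 1" 1] by (simp add: q_def)
  moreover have "A \<subseteq> {x. poly q x = 0}"
    using assms(1) by (auto simp: q_def poly_sum poly_lagrange_basis)
  then have "card A \<le> degree q"
    using card_mono[OF poly_roots_finite[OF \<open>q \<noteq> 0\<close>]] card_poly_roots_bound[OF \<open>q \<noteq> 0\<close>]
    by (meson le_trans)
  ultimately show False by simp
qed

lemma lagrange_basis_mult_linear:
  assumes "finite A" "c \<in> A"
  shows "lagrange_basis A c * [:- c, 1:] =
    smult (inverse (\<Prod>c'\<in>A - {c}. c - c')) (\<Prod>c'\<in>A. [:- c', 1:])"
  using assms by (simp add: lagrange_basis_def prod.remove mult.commute)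

definition poly_Var :: "nat \<Rightarrow> rat poly \<Rightarrow> mpoly" where
  "poly_Var v p = poly (map_poly Const p) (Var v)"

lemma map_poly_Const_add: "map_poly Const (p + q) = map_poly Const p + map_poly Const q"
  by (rule poly_eqI) (simp add: coeff_map_poly Const_add)

lemma map_poly_Const_mult: "map_poly Const (p * q) = map_poly Const p * map_poly Const q"
  by (rule poly_eqI) (simp add: coeff_map_poly coeff_mult Const_sum Const_mult)

lemma poly_Var_mult: "poly_Var v (p * q) = poly_Var v p * poly_Var v q"
  by (simp add: poly_Var_def map_poly_Const_mult)

lemma poly_Var_const: "poly_Var v [:c:] = Const c"
  by (simp add: poly_Var_def map_poly_pCons)

lemma poly_Var_one: "poly_Var v 1 = 1"
  using poly_Var_const[of v 1] by (simp add: one_pCons)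

lemma poly_Var_linear: "poly_Var v [:- c, 1:] = Var v - Const c"
  by (simp add: poly_Var_def Const_uminus map_poly_pCons)

lemma poly_Var_smult: "poly_Var v (smult c p) = Const c * poly_Var v p"
  using poly_Var_mult[of v "[:c:]" p] by (simp add: poly_Var_const)

lemma poly_Var_prod: "poly_Var v (\<Prod>i\<in>S. f i) = (\<Prod>i\<in>S. poly_Var v (f i))"
  by (induction S rule: infinite_finite_induct) (auto simp: poly_Var_mult poly_Var_one)

lemma poly_Var_sum: "poly_Var v (\<Sum>i\<in>S. f i) = (\<Sum>i\<in>S. poly_Var v (f i))"
  by (induction S rule: infinite_finite_induct) (simp_all add: poly_Var_def map_poly_Const_add)

lemma polyring_poly_Var [intro]: "v < N \<Longrightarrow> poly_Var v p \<in> polyring N"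
  unfolding poly_Var_def poly_altdef
  by (intro polyring_sum polyring_mult polyring_power polyring_Var) (auto simp: coeff_map_poly)

definition root_prod :: "nat \<Rightarrow> rat set \<Rightarrow> mpoly" where
  "root_prod v A = (\<Prod>c\<in>A. Var v - Const c)"

lemma root_prod_set:
  assumes "distinct \<alpha>"
  shows "root_prod v (set \<alpha>) = (-1) ^ length \<alpha> * (\<Prod>i<length \<alpha>. Const (\<alpha> ! i) - Var v)"
proof -
  have "root_prod v (set \<alpha>) = (\<Prod>i<length \<alpha>. Var v - Const (\<alpha> ! i))"
    unfolding root_prod_def prod.distinct_set_conv_list[OF assms] prod.list_conv_set_nth
    by (intro prod.cong) auto
  also have "\<dots> = (\<Prod>i<length \<alpha>. - (Const (\<alpha> ! i) - Var v))"
    by simp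
  finally show ?thesis
    by (simp only: prod_uminus card_lessThan)
qed

definition lagrange_prod :: "(nat \<Rightarrow> nat) \<Rightarrow> nat set \<Rightarrow> rat set \<Rightarrow> (nat \<Rightarrow> rat) \<Rightarrow> mpoly" where
  "lagrange_prod var S A b = (\<Prod>j\<in>S. poly_Var (var j) (lagrange_basis A (b j)))"

lemma polyring_lagrange_prod [intro]:
  "(\<And>j. j \<in> S \<Longrightarrow> var j < N) \<Longrightarrow> lagrange_prod var S A b \<in> polyring N"
  unfolding lagrange_prod_def by (intro polyring_prod polyring_poly_Var)

lemma sum_lagrange_prod:
  assumes "finite S" "finite A" "A \<noteq> {}"
  shows "(\<Sum>b\<in>PiE S (\<lambda>_. A). lagrange_prod var S A b) = 1"
proof -
  have "(\<Sum>b\<in>PiE S (\<lambda>_. A). lagrange_prod var S A b) =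
      (\<Prod>j\<in>S. \<Sum>c\<in>A. poly_Var (var j) (lagrange_basis A c))"
    unfolding lagrange_prod_def by (rule prod_sum_PiE[symmetric]) (use assms in auto)
  also have "\<dots> = 1"
    using assms by (simp flip: poly_Var_sum add: sum_lagrange_basis poly_Var_one)
  finally show ?thesis .
qed

lemma colon_cong_lagrange_prod:
  assumes "finite A" "finite S" "j \<in> S" "b j \<in> A"
    and "\<And>j. j \<in> S \<Longrightarrow> var j < N" "F \<in> polyring N"
    and "F * root_prod (var j) A \<in> ideal_gen N G"
  shows "colon_cong N G (F * lagrange_prod var S A b) (Var (var j)) (Const (b j))"
proof -
  let ?R = "\<Prod>j'\<in>S - {j}. poly_Var (var j') (lagrange_basis A (b j'))"
  let ?\<kappa> = "inverse (\<Prod>c'\<in>A - {b j}. b j - c')"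
  have "poly_Var (var j) (lagrange_basis A (b j)) * (Var (var j) - Const (b j)) =
      Const ?\<kappa> * root_prod (var j) A"
    using arg_cong[OF lagrange_basis_mult_linear[OF assms(1,4)], of "poly_Var (var j)"]
    by (simp only: poly_Var_mult poly_Var_linear poly_Var_smult poly_Var_prod root_prod_def)
  then have "F * lagrange_prod var S A b * (Var (var j) - Const (b j)) =
      (Const ?\<kappa> * ?R) * (F * root_prod (var j) A)"
    using assms(2,3) by (simp add: lagrange_prod_def prod.remove mult_ac)
  also have "\<dots> \<in> ideal_gen N G"
    using assms(5) by (intro ideal_gen_mult[OF _ assms(7)] polyring_mult polyring_prod) auto
  finally show ?thesis
    by (simp add: colon_cong_def)
qed

lemma length_xs [simp]: "length (xs n) = n"
  by (simp add: xs_def)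

lemma nth_xs [simp]: "i < n \<Longrightarrow> xs n ! i = Var i"
  by (simp add: xs_def)

lemma length_ys [simp]: "length (ys n d) = d"
  by (simp add: ys_def)

lemma nth_ys [simp]: "j < d \<Longrightarrow> ys n d ! j = Var (n + j)"
  by (simp add: ys_def)

lemma polyring_set_xs: "x \<in> set (xs n) \<Longrightarrow> x \<in> polyring (n + d)"
  by (auto simp: xs_def)

lemma polyring_set_ys: "x \<in> set (ys n d) \<Longrightarrow> x \<in> polyring (n + d)"
  by (auto simp: ys_def)

lemma map_eval_xs: "map (\<lambda>p. eval p z) (xs n) = map z [0..<n]"
  by (rule nth_equalityI) auto

lemma map_eval_ys: "map (\<lambda>p. eval p z) (ys n d) = map (\<lambda>j. z (n + j)) [0..<d]"
  by (rule nth_equalityI) auto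

lemma map_eval_Const: "map (\<lambda>p. eval p z) (map Const \<alpha>) = \<alpha>"
  by (induction \<alpha>) auto

lemma gens_eq:
  "gens n k d \<alpha> =
     {esym_diff r (map Const \<alpha>) (ys n d) | r. r > k - d}
   \<union> {esym_diff r (xs n) (ys n d) | r. r > n - d}
   \<union> {(\<Prod>j<d. Var i - Var (n + j)) | i. i < n}"
proof -
  have "(\<Sum>j\<le>d. (-1) ^ j * Var i ^ (d - j) * esym j (ys n d)) = (\<Prod>j<d. Var i - Var (n + j))"
    for i
    using prod_diff_eq_sum_esym[of "Var i" "ys n d"] by simp
  then show ?thesis
    unfolding gens_def esym_diff_def by simp
qed

lemma gens_subset_polyring: "gens n k d \<alpha> \<subseteq> polyring (n + d)"
proof -
  have "(\<Prod>j<d. Var i - Var (n + j)) \<in> polyring (n + d)" if "i < n" for i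
    using that by (intro polyring_prod polyring_diff polyring_Var) auto
  then show ?thesis
    unfolding gens_eq by (auto intro!: polyring_esym_diff dest: polyring_set_xs polyring_set_ys)
qed

lemma vars_esym_diff_Const_ys: "vars (esym_diff r (map Const \<alpha>) (ys n d)) \<subseteq> {n..<n + d}"
  by (rule vars_esym_diff_subset) (auto simp: ys_def dest!: subsetD[OF vars_Var])

lemma image_shift_atLeast0LessThan:
  fixes f :: "nat \<Rightarrow> 'a"
  shows "(\<lambda>j. f (n + j)) ` {0..<d} = f ` {n..<n + d}"
proof -
  have "(\<lambda>j. f (n + j)) ` {0..<d} = f ` (plus n ` {0..<d})"
    by (simp only: image_image)
  also have "plus n ` {0..<d} = {n..<n + d}"
    by (simp add: add.commute)
  finally show ?thesis .
qed

lemma distinct_map_shift_upt: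
  fixes f :: "nat \<Rightarrow> 'a"
  assumes "inj_on f {n..<n + d}"
  shows "distinct (map (\<lambda>j. f (n + j)) [0..<d])"
proof -
  have "inj_on (\<lambda>j. f (n + j)) {0..<d}"
  proof (rule inj_onI)
    fix x y assume "x \<in> {0..<d}" "y \<in> {0..<d}" "f (n + x) = f (n + y)"
    then show "x = y"
      using inj_onD[OF assms, of "n + x" "n + y"] by auto
  qed
  then show ?thesis
    by (simp add: distinct_map)
qed

lemma eval_gens_Zset:
  assumes "g \<in> gens n k d \<alpha>" "z \<in> Zset n d \<alpha>" "length \<alpha> = k" "d \<le> k" "k \<le> n"
  shows "eval g z = 0"
proof -
  let ?v = "map (\<lambda>j. z (n + j)) [0..<d]"
  have z: "\<And>i. i < n + d \<Longrightarrow> z i \<in> set \<alpha>" "inj_on z {n..<n + d}"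
    "z ` {..<n} = z ` {n..<n + d}"
    using assms(2) by (auto simp: Zset_def)
  have distinct: "distinct ?v"
    using z(2) by (rule distinct_map_shift_upt)
  have set_v: "set ?v = z ` {n..<n + d}"
    by (simp add: image_shift_atLeast0LessThan)
  consider r where "g = esym_diff r (map Const \<alpha>) (ys n d)" "r > k - d"
    | r where "g = esym_diff r (xs n) (ys n d)" "r > n - d"
    | i where "g = (\<Prod>j<d. Var i - Var (n + j))" "i < n"
    using assms(1) unfolding gens_eq by blast
  then show ?thesis
  proof cases
    case (1 r)
    have "mset ?v \<subseteq># mset \<alpha>"
      using z(1) set_v by (intro mset_subset_eq_if_distinct_subset[OF distinct]) auto
    then show ?thesis
      using 1 assms(3,4) by (simp add: eval_esym_diff map_eval_ys comp_def esym_diff_eq_0_if_subset)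
  next
    case (2 r)
    have "mset ?v \<subseteq># mset (map z [0..<n])"
      using z(3) set_v by (intro mset_subset_eq_if_distinct_subset[OF distinct])
        (auto simp: atLeast0LessThan)
    then show ?thesis
      using 2 assms(4,5) by (simp add: eval_esym_diff map_eval_xs map_eval_ys esym_diff_eq_0_if_subset)
  next
    case (3 i)
    then have "z i \<in> z ` {n..<n + d}"
      using z(3) by blast
    then obtain i' where "i' \<in> {n..<n + d}" "z i = z i'"
      by blast
    then have "i' - n < d" "z i = z (n + (i' - n))"
      by auto
    then show ?thesis
      using 3 by (auto simp: eval_prod eval_diff intro: prod_zero)
  qed
qed

lemma ideal_gen_gens_subset_vanishing_ideal:
  assumes "length \<alpha> = k" "d \<le> k" "k \<le> n"
  shows "ideal_gen (n + d) (gens n k d \<alpha>) \<subseteq> vanishing_ideal (n + d) (Zset n d \<alpha>)"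
  by (rule ideal_gen_subset_vanishing_ideal[OF gens_subset_polyring])
    (rule eval_gens_Zset[OF _ _ assms])

definition xy_point :: "nat \<Rightarrow> nat \<Rightarrow> (nat \<Rightarrow> rat) \<Rightarrow> (nat \<Rightarrow> rat) \<Rightarrow> nat \<Rightarrow> rat" where
  "xy_point n d a b i = (if i < n then a i else if i < n + d then b (i - n) else 0)"

lemma map_xy_point_xs: "map (xy_point n d a b) [0..<n] = map a [0..<n]"
  by (rule map_cong) (auto simp: xy_point_def)

lemma map_xy_point_ys: "map (\<lambda>j. xy_point n d a b (n + j)) [0..<d] = map b [0..<d]"
  by (rule map_cong) (auto simp: xy_point_def)

lemma xy_point_in_Zset:
  assumes b: "b \<in> PiE {..<d} (\<lambda>_. set \<alpha>)" and inj: "inj_on b {..<d}"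
    and onto: "a ` {..<n} = b ` {..<d}"
  shows "xy_point n d a b \<in> Zset n d \<alpha>"
proof -
  have x: "xy_point n d a b ` {..<n} = b ` {..<d}"
    using onto by (simp add: xy_point_def)
  have y: "xy_point n d a b ` {n..<n + d} = b ` {..<d}"
  proof -
    have "xy_point n d a b ` {n..<n + d} = (\<lambda>j. xy_point n d a b (n + j)) ` {0..<d}"
      by (simp only: image_shift_atLeast0LessThan)
    also have "\<dots> = b ` {0..<d}"
      by (rule image_cong) (simp_all add: xy_point_def)
    finally show ?thesis
      by (simp add: atLeast0LessThan)
  qed
  have "inj_on (xy_point n d a b) {n..<n + d}"
  proof (rule inj_onI)
    fix i i' assume "i \<in> {n..<n + d}" "i' \<in> {n..<n + d}" "xy_point n d a b i = xy_point n d a b i'"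
    then have "b (i - n) = b (i' - n)" "i - n \<in> {..<d}" "i' - n \<in> {..<d}"
      by (auto simp: xy_point_def)
    then show "i = i'"
      using inj_onD[OF inj] \<open>i \<in> {n..<n + d}\<close> \<open>i' \<in> {n..<n + d}\<close> by fastforce
  qed
  moreover have "xy_point n d a b i \<in> set \<alpha>" if "i < n + d" for i
  proof -
    have "xy_point n d a b i \<in> xy_point n d a b ` {..<n} \<union> xy_point n d a b ` {n..<n + d}"
      using that by (cases "i < n") auto
    then show ?thesis
      using x y b by auto
  qed
  ultimately show ?thesis
    using x y by (simp add: Zset_def xy_point_def)
qed

context
  fixes n k d :: nat and \<alpha> :: "rat list"
  assumes d_pos: "1 \<le> d" and d_le_k: "d \<le> k" and k_le_n: "k \<le> n"
    and length_\<alpha>: "length \<alpha> = k" and distinct_\<alpha>: "distinct \<alpha>"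
begin

abbreviation gens_ideal :: "mpoly set" where
  "gens_ideal \<equiv> ideal_gen (n + d) (gens n k d \<alpha>)"

abbreviation y_lagrange :: "(nat \<Rightarrow> rat) \<Rightarrow> mpoly" where
  "y_lagrange b \<equiv> lagrange_prod (plus n) {..<d} (set \<alpha>) b"

abbreviation x_lagrange :: "rat set \<Rightarrow> (nat \<Rightarrow> rat) \<Rightarrow> mpoly" where
  "x_lagrange B a \<equiv> lagrange_prod id {..<n} B a"

text \<open>By \<open>prod_diff_eq_sum_esym_diff\<close>, \<open>\<Prod>\<^sub>c (c - y\<^sub>j)\<close> is a combination of the generators
  \<open>esym_diff r \<alpha> y\<close> with \<open>r > k - d\<close>; the other terms involve \<open>e\<^sub>s\<close> of \<open>d - 1\<close> variables
  with \<open>s \<ge> d\<close>.\<close>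

lemma root_prod_y_in_gens_ideal:
  assumes "j < d"
  shows "root_prod (n + j) (set \<alpha>) \<in> gens_ideal"
proof -
  let ?y = "Var (n + j)" and ?u = "map Const \<alpha>"
  define w where "w = remove1 ?y (ys n d)"
  have "?y \<in> set (ys n d)"
    using assms by (auto simp: ys_def)
  then have mset_ys: "mset (ys n d) = add_mset ?y (mset w)"
    by (simp add: w_def)
  have length_w: "length w = d - 1"
    using \<open>?y \<in> set (ys n d)\<close> by (simp add: w_def length_remove1)
  have "(\<Prod>i<k. Const (\<alpha> ! i) - ?y) = (\<Sum>i\<le>k. esym_diff i ?u (ys n d) * esym (k - i) w)"
    using prod_diff_eq_sum_esym_diff[OF mset_ys, of ?u] length_\<alpha> by simp
  also have "\<dots> \<in> gens_ideal"
  proof (rule ideal_gen_sum)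
    fix i assume "i \<in> {..k}"
    show "esym_diff i ?u (ys n d) * esym (k - i) w \<in> gens_ideal"
    proof (cases "i > k - d")
      case True
      then have "esym_diff i ?u (ys n d) \<in> gens_ideal"
        unfolding gens_eq by blast
      moreover have "set w \<subseteq> set (ys n d)"
        by (simp add: w_def set_remove1_subset)
      then have "esym (k - i) w \<in> polyring (n + d)"
        by (intro polyring_esym) (auto dest: polyring_set_ys)
      ultimately show ?thesis
        by (rule ideal_gen_mult_right[rotated])
    next
      case False
      then have "esym (k - i) w = 0"
        using length_w d_pos d_le_k by (intro esym_eq_0) simp
      then show ?thesis by simp
    qed
  qed
  finally have "(-1) ^ k * (\<Prod>i<k. Const (\<alpha> ! i) - ?y) \<in> gens_ideal"
    by (intro ideal_gen_mult polyring_power polyring_uminus polyring_one)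
  then show ?thesis
    using root_prod_set[OF distinct_\<alpha>, of "n + j"] length_\<alpha> by simp
qed

lemma colon_cong_y_lagrange:
  assumes "b \<in> PiE {..<d} (\<lambda>_. set \<alpha>)" "j < d"
  shows "colon_cong (n + d) (gens n k d \<alpha>) (y_lagrange b) (Var (n + j)) (Const (b j))"
  using colon_cong_lagrange_prod[of "set \<alpha>" "{..<d}" j b "plus n" "n + d" 1]
    root_prod_y_in_gens_ideal assms by auto

lemma y_lagrange_in_gens_ideal_if_not_inj:
  assumes b: "b \<in> PiE {..<d} (\<lambda>_. set \<alpha>)" and not_inj: "\<not> inj_on b {..<d}"
  shows "y_lagrange b \<in> gens_ideal"
proof -
  have "\<not> mset (map b [0..<d]) \<subseteq># mset \<alpha>"
    using distinct_if_mset_subset_eq distinct_\<alpha> not_inj by (fastforce simp: distinct_map atLeast0LessThan)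
  then obtain r where r: "r > k - d" "esym_diff r \<alpha> (map b [0..<d]) \<noteq> 0"
    using esym_diff_eq_0_iff_subset[of "map b [0..<d]" \<alpha>] d_le_k length_\<alpha> by auto
  let ?g = "esym_diff r (map Const \<alpha>) (ys n d)"
  let ?z = "xy_point n d (\<lambda>_. 0) b"
  have g: "?g \<in> gens n k d \<alpha>"
    using r(1) unfolding gens_eq by blast
  have "colon_cong (n + d) (gens n k d \<alpha>) (y_lagrange b) ?g (Const (eval ?g ?z))"
  proof (rule colon_cong_eval)
    show "?g \<in> polyring (n + d)"
      using g gens_subset_polyring by blast
    fix i assume "i \<in> vars ?g"
    then have "n \<le> i" "i < n + d"
      using vars_esym_diff_Const_ys by fastforce+
    then show "colon_cong (n + d) (gens n k d \<alpha>) (y_lagrange b) (Var i) (Const (?z i))"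
      using colon_cong_y_lagrange[OF b, of "i - n"] by (simp add: xy_point_def)
  qed
  moreover have "eval ?g ?z = esym_diff r \<alpha> (map b [0..<d])"
    by (simp only: eval_esym_diff map_eval_Const map_eval_ys map_xy_point_ys)
  ultimately have "colon_cong (n + d) (gens n k d \<alpha>) (y_lagrange b) ?g
      (Const (esym_diff r \<alpha> (map b [0..<d])))"
    by simp
  from this ideal_gen_gen[OF g] r(2) show ?thesis
    by (rule ideal_gen_if_colon_cong_Const) auto
qed

lemma y_lagrange_mult_root_prod_in_gens_ideal:
  assumes b: "b \<in> PiE {..<d} (\<lambda>_. set \<alpha>)" and inj: "inj_on b {..<d}" and "i < n"
  shows "y_lagrange b * root_prod i (b ` {..<d}) \<in> gens_ideal"
proof -
  have "colon_cong (n + d) (gens n k d \<alpha>) (y_lagrange b)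
      (\<Prod>j<d. Var i - Var (n + j)) (\<Prod>j<d. Var i - Const (b j))"
    using \<open>i < n\<close> colon_cong_y_lagrange[OF b]
    by (intro colon_cong_prod colon_cong_diff colon_cong_refl) (auto intro!: polyring_diff polyring_Var)
  moreover have "y_lagrange b * (\<Prod>j<d. Var i - Var (n + j)) \<in> gens_ideal"
    using \<open>i < n\<close> by (intro ideal_gen_mult ideal_gen_gen) (auto simp: gens_eq)
  ultimately have "y_lagrange b * (\<Prod>j<d. Var i - Const (b j)) \<in> gens_ideal"
    by (rule colon_cong_ideal_gen)
  moreover have "root_prod i (b ` {..<d}) = (\<Prod>j<d. Var i - Const (b j))"
    unfolding root_prod_def using inj by (simp add: prod.reindex)
  ultimately show ?thesis by simp
qed

lemma colon_cong_xy_lagrange_eval: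
  assumes b: "b \<in> PiE {..<d} (\<lambda>_. set \<alpha>)" and inj: "inj_on b {..<d}"
    and a: "a \<in> PiE {..<n} (\<lambda>_. b ` {..<d})" and p: "p \<in> polyring (n + d)"
  shows "colon_cong (n + d) (gens n k d \<alpha>) (y_lagrange b * x_lagrange (b ` {..<d}) a)
    p (Const (eval p (xy_point n d a b)))"
proof (rule colon_cong_eval[OF p])
  let ?E = "y_lagrange b * x_lagrange (b ` {..<d}) a"
  fix i assume "i \<in> vars p"
  then have "i < n + d"
    using p by (simp add: polyring_def lessThan_iff subset_iff)
  show "colon_cong (n + d) (gens n k d \<alpha>) ?E (Var i) (Const (xy_point n d a b i))"
  proof (cases "i < n")
    case True
    have "a i \<in> b ` {..<d}"
      using a True by auto
    moreover have "y_lagrange b \<in> polyring (n + d)"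
      by (rule polyring_lagrange_prod) simp
    ultimately have "colon_cong (n + d) (gens n k d \<alpha>) ?E (Var (id i)) (Const (a i))"
      using True y_lagrange_mult_root_prod_in_gens_ideal[OF b inj True]
      by (intro colon_cong_lagrange_prod) simp_all
    then show ?thesis
      using True by (simp add: xy_point_def)
  next
    case False
    then obtain j where j: "j < d" "i = n + j"
      using \<open>i < n + d\<close> by (metis add_diff_inverse_nat nat_add_left_cancel_less)
    have "colon_cong (n + d) (gens n k d \<alpha>) (x_lagrange (b ` {..<d}) a * y_lagrange b)
        (Var (n + j)) (Const (b j))"
      by (rule colon_cong_mult_left[OF colon_cong_y_lagrange[OF b j(1)]])
        (rule polyring_lagrange_prod, simp)
    then show ?thesis
      using j by (simp add: xy_point_def mult.commute)
  qed
qed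

lemma xy_lagrange_in_gens_ideal_if_not_onto:
  assumes b: "b \<in> PiE {..<d} (\<lambda>_. set \<alpha>)" and inj: "inj_on b {..<d}"
    and a: "a \<in> PiE {..<n} (\<lambda>_. b ` {..<d})" and not_onto: "a ` {..<n} \<noteq> b ` {..<d}"
  shows "y_lagrange b * x_lagrange (b ` {..<d}) a \<in> gens_ideal"
proof -
  have "\<not> mset (map b [0..<d]) \<subseteq># mset (map a [0..<n])"
    using a not_onto set_mset_mono[of "mset (map b [0..<d])" "mset (map a [0..<n])"]
    by (auto simp: atLeast0LessThan)
  then obtain r where r: "r > n - d" "esym_diff r (map a [0..<n]) (map b [0..<d]) \<noteq> 0"
    using esym_diff_eq_0_iff_subset[of "map b [0..<d]" "map a [0..<n]"] d_le_k k_le_n by auto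
  let ?g = "esym_diff r (xs n) (ys n d)"
  have g: "?g \<in> gens n k d \<alpha>"
    using r(1) unfolding gens_eq by blast
  then have "colon_cong (n + d) (gens n k d \<alpha>) (y_lagrange b * x_lagrange (b ` {..<d}) a) ?g
      (Const (eval ?g (xy_point n d a b)))"
    using gens_subset_polyring by (intro colon_cong_xy_lagrange_eval[OF b inj a]) blast
  moreover have "eval ?g (xy_point n d a b) = esym_diff r (map a [0..<n]) (map b [0..<d])"
    by (simp only: eval_esym_diff map_eval_xs map_eval_ys map_xy_point_xs map_xy_point_ys)
  ultimately have "colon_cong (n + d) (gens n k d \<alpha>) (y_lagrange b * x_lagrange (b ` {..<d}) a) ?g
      (Const (esym_diff r (map a [0..<n]) (map b [0..<d])))"
    by simp
  from this ideal_gen_gen[OF g] r(2) show ?thesis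
    by (rule ideal_gen_if_colon_cong_Const) (intro polyring_mult polyring_lagrange_prod; simp)
qed

lemma y_lagrange_mult_in_gens_ideal_if_inj:
  assumes p: "p \<in> vanishing_ideal (n + d) (Zset n d \<alpha>)"
    and b: "b \<in> PiE {..<d} (\<lambda>_. set \<alpha>)" and inj: "inj_on b {..<d}"
  shows "y_lagrange b * p \<in> gens_ideal"
proof -
  let ?B = "b ` {..<d}"
  have "p \<in> polyring (n + d)"
    using p by (simp add: vanishing_ideal_def)
  have terms: "y_lagrange b * x_lagrange ?B a * p \<in> gens_ideal" if a: "a \<in> PiE {..<n} (\<lambda>_. ?B)" for a
  proof (cases "a ` {..<n} = ?B")
    case True
    then have "eval p (xy_point n d a b) = 0"
      using p xy_point_in_Zset[OF b inj] by (simp add: vanishing_ideal_def)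
    then show ?thesis
      using colon_cong_xy_lagrange_eval[OF b inj a \<open>p \<in> polyring (n + d)\<close>]
      by (simp add: colon_cong_def)
  next
    case False
    then show ?thesis
      by (rule ideal_gen_mult_right[OF \<open>p \<in> polyring (n + d)\<close>
            xy_lagrange_in_gens_ideal_if_not_onto[OF b inj a]])
  qed
  have "b 0 \<in> ?B"
    using d_pos by simp
  then have "?B \<noteq> {}"
    by blast
  then have "y_lagrange b * p = y_lagrange b * (\<Sum>a\<in>PiE {..<n} (\<lambda>_. ?B). x_lagrange ?B a) * p"
    by (simp add: sum_lagrange_prod)
  also have "\<dots> = (\<Sum>a\<in>PiE {..<n} (\<lambda>_. ?B). y_lagrange b * x_lagrange ?B a * p)"
    by (simp add: sum_distrib_left sum_distrib_right)
  also have "\<dots> \<in> gens_ideal"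
    by (rule ideal_gen_sum) (rule terms)
  finally show ?thesis .
qed

lemma vanishing_ideal_subset_gens_ideal: "vanishing_ideal (n + d) (Zset n d \<alpha>) \<subseteq> gens_ideal"
proof
  fix p assume p: "p \<in> vanishing_ideal (n + d) (Zset n d \<alpha>)"
  have terms: "y_lagrange b * p \<in> gens_ideal" if b: "b \<in> PiE {..<d} (\<lambda>_. set \<alpha>)" for b
  proof (cases "inj_on b {..<d}")
    case True
    then show ?thesis
      by (rule y_lagrange_mult_in_gens_ideal_if_inj[OF p b])
  next
    case False
    have "p \<in> polyring (n + d)"
      using p by (simp add: vanishing_ideal_def)
    with False show ?thesis
      by (intro ideal_gen_mult_right y_lagrange_in_gens_ideal_if_not_inj[OF b])
  qed
  have "set \<alpha> \<noteq> {}"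
    using d_pos d_le_k length_\<alpha> by auto
  then have "p = (\<Sum>b\<in>PiE {..<d} (\<lambda>_. set \<alpha>). y_lagrange b) * p"
    by (simp add: sum_lagrange_prod)
  also have "\<dots> = (\<Sum>b\<in>PiE {..<d} (\<lambda>_. set \<alpha>). y_lagrange b * p)"
    by (simp add: sum_distrib_right)
  also have "\<dots> \<in> gens_ideal"
    by (rule ideal_gen_sum) (rule terms)
  finally show "p \<in> gens_ideal" .
qed

end

theorem lemma3p2:
  fixes n k d :: nat and \<alpha> :: "rat list"
  assumes "1 \<le> d" "d \<le> k" "k \<le> n"
    and "length \<alpha> = k" "distinct \<alpha>"
  shows "vanishing_ideal (n+d) (Zset n d \<alpha>) = ideal_gen (n+d) (gens n k d \<alpha>)"
  using vanishing_ideal_subset_gens_ideal[OF assms]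
    ideal_gen_gens_subset_vanishing_ideal[OF assms(4,2,3)] by blast

end
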